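(* Let $\nu\in\mathcal{P}_2(\mathbb{R}^2)$, $\gamma\in\Gamma(\nu)$, and $\mu$ the $x$-marginal of $\gamma$. For every $G\in\mathfrak{M}$, $$\gamma\big(\phi_G(y)-c(x,y)\,\big|\,x\big)\le\phi_G(x)\le0,\qquad\gamma\text{-a.s.},$$ and consequently $$\int\phi_G(y)\,d\nu-\int c(x,y)\,d\gamma\le\int\phi_G(x)\,d\mu\le0.$$
   Context: $c(x,y)=(x_1-y_1)(x_2-y_2)$ for $x,y\in\mathbb{R}^2$. $\mathcal{P}_2(\mathbb{R}^d)$: Borel probability measures with finite second moment. $\Gamma(\nu)$: the set of $\gamma\in\mathcal{P}_2(\mathbb{R}^2\times\mathbb{R}^2)$ (points $(x,y)$) with $y$-marginal $\nu$ and $\gamma(y|x)=x$. For a function $f$, $\gamma(f|x)$ denotes the conditional expectation of $f$ given the coordinate $x$ under $\gamma$. $\mathfrak{M}$: family of maximal monotone sets $G\subset\mathbb{R}^2$ (monotone: $c(r,s)\ge0$ for $r,s\in G$; maximal: not a proper subset of a monotone set). $\phi_G(y)=\inf_{x\in G}c(x,y)\in[-\infty,0]$. *)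

theory Defs
  imports "HOL-Probability.Probability"
begin

definition cost :: "real \<times> real \<Rightarrow> real \<times> real \<Rightarrow> real" where
  "cost x y = (fst x - fst y) * (snd x - snd y)"

definition P2 :: "('a::euclidean_space) measure \<Rightarrow> bool" where
  "P2 M \<longleftrightarrow> prob_space M \<and> sets M = sets borel \<and> integrable M (\<lambda>z. (norm z)\<^sup>2)"

definition sigma_x :: "(('a::topological_space) \<times> ('b::topological_space)) measure
    \<Rightarrow> ('a \<times> 'b) measure" where
  "sigma_x M = vimage_algebra (space M) fst borel"

text \<open>Conditional expectation of an extended-real valued function, defined as the
  difference of the conditional expectations of its positive and negative parts
  (exactly as the library's real_cond_exp, but allowing the values -infinity/+infinity).\<close>
definition ereal_cond_exp :: "'a measure \<Rightarrow> 'a measure \<Rightarrow> ('a \<Rightarrow> ereal) \<Rightarrow> 'a \<Rightarrow> ereal" where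
  "ereal_cond_exp M F f w =
     enn2ereal (nn_cond_exp M F (\<lambda>v. e2ennreal (f v)) w)
   - enn2ereal (nn_cond_exp M F (\<lambda>v. e2ennreal (- f v)) w)"

definition ereal_integral :: "'a measure \<Rightarrow> ('a \<Rightarrow> ereal) \<Rightarrow> ereal" where
  "ereal_integral M f =
     enn2ereal (\<integral>\<^sup>+ v. e2ennreal (f v) \<partial>M) - enn2ereal (\<integral>\<^sup>+ v. e2ennreal (- f v) \<partial>M)"

definition Gamma :: "(real \<times> real) measure \<Rightarrow> ((real \<times> real) \<times> (real \<times> real)) measure \<Rightarrow> bool" where
  "Gamma \<nu> \<gamma> \<longleftrightarrow> P2 \<gamma> \<and> distr \<gamma> borel snd = \<nu>
     \<and> (AE z in \<gamma>. real_cond_exp \<gamma> (sigma_x \<gamma>) (\<lambda>w. fst (snd w)) z = fst (fst z))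
     \<and> (AE z in \<gamma>. real_cond_exp \<gamma> (sigma_x \<gamma>) (\<lambda>w. snd (snd w)) z = snd (fst z))"

definition monotone_set :: "(real \<times> real) set \<Rightarrow> bool" where
  "monotone_set G \<longleftrightarrow> (\<forall>r\<in>G. \<forall>s\<in>G. cost r s \<ge> 0)"

definition maximal_monotone :: "(real \<times> real) set \<Rightarrow> bool" where
  "maximal_monotone G \<longleftrightarrow> monotone_set G \<and> \<not> (\<exists>H. monotone_set H \<and> G \<subset> H)"

definition phi :: "(real \<times> real) set \<Rightarrow> real \<times> real \<Rightarrow> ereal" where
  "phi G y = (INF x\<in>G. ereal (cost x y))"

end

theory Submission
  imports Defs
begin

(*
  For g in G we have phi_G(y) - c(x,y) <= c(g,y) - c(x,y), and the right-hand side equals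
  (g1 g2 - x1 x2) + (x1 - g1) y2 + (x2 - g2) y1, which is affine in y with sigma(x)-measurable
  coefficients; the martingale condition gamma(y|x) = x therefore gives it the conditional
  expectation c(g,x).  As phi_G is also the infimum over a countable dense subset of G,
  monotonicity of conditional expectation yields the pointwise bound.  That phi_G <= 0 is
  maximality: a point y outside G with c(g,y) >= 0 for all g in G could be added to G.
  Conditional expectations of the positive and negative parts keep their integrals, so
  integrating the pointwise bound gives the integral inequality.
*)

lemma cost_commute: "cost x y = cost y x"
  unfolding cost_def by (simp add: algebra_simps)

lemma cost_self [simp]: "cost x x = 0"
  unfolding cost_def by simp

lemma phi_le_cost: "x \<in> G \<Longrightarrow> phi G y \<le> ereal (cost x y)"
  unfolding phi_def by (rule INF_lower)

lemma phi_nonpos: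
  assumes "maximal_monotone G"
  shows "phi G y \<le> 0"
proof -
  have "\<exists>x\<in>G. cost x y \<le> 0"
  proof (cases "y \<in> G")
    case True
    then show ?thesis by force
  next
    case False
    then have "\<not> monotone_set (insert y G)"
      using assms unfolding maximal_monotone_def by blast
    then obtain r s where "r \<in> insert y G" "s \<in> insert y G" "cost r s < 0"
      unfolding monotone_set_def by (meson not_le)
    then show ?thesis
      using assms cost_commute[of r s]
      unfolding maximal_monotone_def monotone_set_def by (metis cost_self insertE less_le not_le)
  qed
  then show ?thesis
    using phi_le_cost by (metis order_trans ereal_less_eq(3) zero_ereal_def)
qed

lemma phi_dense_subset:
  assumes "D \<subseteq> G" "G \<subseteq> closure D"
  shows "phi D = phi G"
proof
  fix y
  show "phi D y = phi G y"
  proof (rule antisym)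
    show "phi D y \<le> phi G y"
      unfolding phi_def
    proof (rule INF_greatest)
      fix x assume "x \<in> G"
      then obtain d where d: "\<And>n. d n \<in> D" "d \<longlonglongrightarrow> x"
        using assms(2) closure_sequential by blast
      have "(\<lambda>n. ereal (cost (d n) y)) \<longlonglongrightarrow> ereal (cost x y)"
        using d(2) unfolding cost_def by (intro tendsto_intros)
      then show "(INF g\<in>D. ereal (cost g y)) \<le> ereal (cost x y)"
        by (rule tendsto_lowerbound) (auto intro!: always_eventually INF_lower d(1))
    qed
  qed (unfold phi_def, rule INF_superset_mono[OF assms(1) order_refl])
qed

lemma borel_measurable_fst [measurable]:
  "(fst :: 'a::topological_space \<times> 'b::topological_space \<Rightarrow> 'a) \<in> borel_measurable borel"
  by (intro borel_measurable_continuous_onI continuous_intros)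

lemma borel_measurable_snd [measurable]:
  "(snd :: 'a::topological_space \<times> 'b::topological_space \<Rightarrow> 'b) \<in> borel_measurable borel"
  by (intro borel_measurable_continuous_onI continuous_intros)

lemma borel_measurable_cost [measurable]:
  assumes [measurable]: "f \<in> borel_measurable M" "g \<in> borel_measurable M"
  shows "(\<lambda>w. cost (f w) (g w)) \<in> borel_measurable M"
  unfolding cost_def by measurable

lemma borel_measurable_phi [measurable]: "phi G \<in> borel_measurable borel"
proof -
  obtain D where "countable D" "D \<subseteq> G" "G \<subseteq> closure D"
    by (rule separable)
  then have "phi G = (\<lambda>y. INF x\<in>D. ereal (cost x y))"
    using phi_dense_subset unfolding phi_def by metis
  with \<open>countable D\<close> show ?thesis by simp
qed

lemma enn2ereal_diff_le:
  fixes a A b B :: ennreal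
  assumes "a \<le> A" "A \<noteq> \<infinity>" "B \<le> b" "B \<noteq> \<infinity>"
  shows "enn2ereal a - enn2ereal b \<le> ereal (enn2real A - enn2real B)"
proof -
  have "enn2ereal a - enn2ereal b \<le> enn2ereal A - enn2ereal B"
    using assms by (intro ereal_minus_mono) (simp_all add: less_eq_ennreal.rep_eq)
  also have "\<dots> = ereal (enn2real A - enn2real B)"
    using assms by (metis enn2ereal_ennreal enn2real_nonneg ennreal_enn2real_if ereal_minus(1) infinity_ennreal_def)
  finally show ?thesis .
qed

lemma e2ennreal_uminus_add_le:
  fixes A B :: ennreal
  assumes "enn2ereal A - enn2ereal B \<le> p" "A \<noteq> \<infinity>" "p \<le> 0"
  shows "e2ennreal (- p) + A \<le> B"
proof (cases "B = \<infinity>")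
  case False
  obtain a b where ab: "A = ennreal a" "a \<ge> 0" "B = ennreal b" "b \<ge> 0"
    using assms(2) False by (metis ennreal_cases infinity_ennreal_def)
  then obtain r where r: "p = ereal r" "a - b \<le> r" "r \<le> 0"
    using assms(1,3) by (cases p) auto
  then show ?thesis
    using ab by (simp add: ennreal_plus[symmetric] del: ennreal_plus)
qed (simp add: infinity_ennreal_def)

lemma enn2ereal_diff_le_uminus:
  fixes a b c :: ennreal
  assumes "a + b \<le> c" "b \<noteq> \<infinity>"
  shows "enn2ereal b - enn2ereal c \<le> - enn2ereal a"
proof (cases "c = \<infinity>")
  case False
  then have "a \<noteq> \<infinity>"
    using assms(1) by (metis ennreal_add_eq_top infinity_ennreal_def top_unique)
  then obtain x y z where "a = ennreal x" "b = ennreal y" "c = ennreal z" "x \<ge> 0" "y \<ge> 0" "z \<ge> 0"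
    using assms(2) False by (metis ennreal_cases infinity_ennreal_def)
  with assms(1) show ?thesis
    by (simp add: ennreal_plus[symmetric] del: ennreal_plus)
qed (use assms(2) in \<open>cases b, auto simp: infinity_ennreal_def\<close>)

lemma enn2ereal_diff_eq_of_add_eq:
  fixes hp hm cp cm py :: ennreal
  assumes "hm + cm = hp + cp + py" "hp \<noteq> \<infinity>" "cp \<noteq> \<infinity>" "cm \<noteq> \<infinity>"
  shows "enn2ereal hp - enn2ereal hm = - enn2ereal py - ereal (enn2real cp - enn2real cm)"
proof (cases "py = \<infinity>")
  case True
  then have "hm = \<infinity>"
    using assms(1,4) by (metis ennreal_add_eq_top infinity_ennreal_def)
  with True assms(2) show ?thesis
    by (cases hp) (auto simp: infinity_ennreal_def)
next
  case False
  then have "hm \<noteq> \<infinity>"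
    using assms by (metis ennreal_add_eq_top infinity_ennreal_def)
  with False assms obtain a b c d e where
    "hp = ennreal a" "hm = ennreal b" "cp = ennreal c" "cm = ennreal d" "py = ennreal e"
    "a \<ge> 0" "b \<ge> 0" "c \<ge> 0" "d \<ge> 0" "e \<ge> 0"
    by (metis ennreal_cases infinity_ennreal_def)
  with assms(1) show ?thesis
    by (simp add: ennreal_plus[symmetric] del: ennreal_plus)
qed

lemma e2ennreal_minus_parts:
  fixes p :: ereal and c :: real
  assumes "p \<le> 0"
  shows "e2ennreal (- (p - ereal c)) + ennreal (- c)
    = e2ennreal (p - ereal c) + ennreal c + e2ennreal (- p)"
proof (cases p)
  case (real r)
  have "max (c - r) 0 + max (- c) 0 = max (r - c) 0 + max c 0 + max (- r) 0"
    using assms real by (simp add: max_def)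
  then have "ennreal (max (c - r) 0 + max (- c) 0) = ennreal (max (r - c) 0 + max c 0 + max (- r) 0)"
    by (rule arg_cong)
  then show ?thesis
    using real by (simp add: ennreal_plus)
qed (use assms in auto)

lemma ereal_integral_nonpos_eq:
  assumes "\<And>x. f x \<le> 0"
  shows "ereal_integral M f = - enn2ereal (\<integral>\<^sup>+ x. e2ennreal (- f x) \<partial>M)"
  unfolding ereal_integral_def using assms by (simp add: e2ennreal_neg zero_ennreal.rep_eq)

lemma ereal_integral_nonpos: "(\<And>x. f x \<le> 0) \<Longrightarrow> ereal_integral M f \<le> 0"
  by (simp add: ereal_integral_nonpos_eq)

lemma ereal_integral_distr:
  assumes "T \<in> measurable M N" "f \<in> borel_measurable N"
  shows "ereal_integral (distr M N T) f = ereal_integral M (\<lambda>x. f (T x))"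
  unfolding ereal_integral_def using assms by (simp add: nn_integral_distr)

lemma nn_integral_e2ennreal_diff_finite:
  assumes "\<And>x. f x \<le> 0" "integrable M c"
  shows "(\<integral>\<^sup>+ x. e2ennreal (f x - ereal (c x)) \<partial>M) \<noteq> \<infinity>"
proof -
  have "e2ennreal (f x - ereal (c x)) \<le> ennreal (- c x)" for x
  proof -
    have "f x - ereal (c x) \<le> ereal (- c x)"
      using assms(1)[of x] by (cases "f x") auto
    then show ?thesis
      using e2ennreal_mono by fastforce
  qed
  then have "(\<integral>\<^sup>+ x. e2ennreal (f x - ereal (c x)) \<partial>M) \<le> (\<integral>\<^sup>+ x. ennreal (- c x) \<partial>M)"
    by (intro nn_integral_mono)
  with integrableD(3)[OF assms(2)] show ?thesis
    by (metis infinity_ennreal_def neq_top_trans)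
qed

lemma ereal_integral_diff_integral:
  assumes [measurable]: "f \<in> borel_measurable M" and nonpos: "\<And>x. f x \<le> 0" and c: "integrable M c"
  shows "ereal_integral M (\<lambda>x. f x - ereal (c x)) = ereal_integral M f - ereal (\<integral>x. c x \<partial>M)"
proof -
  have [measurable]: "c \<in> borel_measurable M"
    using c by simp
  define Hp where "Hp = (\<integral>\<^sup>+ x. e2ennreal (f x - ereal (c x)) \<partial>M)"
  define Hm where "Hm = (\<integral>\<^sup>+ x. e2ennreal (- (f x - ereal (c x))) \<partial>M)"
  define Cp where "Cp = (\<integral>\<^sup>+ x. ennreal (c x) \<partial>M)"
  define Cm where "Cm = (\<integral>\<^sup>+ x. ennreal (- c x) \<partial>M)"
  define Fm where "Fm = (\<integral>\<^sup>+ x. e2ennreal (- f x) \<partial>M)"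
  have "Hm + Cm = (\<integral>\<^sup>+ x. e2ennreal (- (f x - ereal (c x))) + ennreal (- c x) \<partial>M)"
    unfolding Hm_def Cm_def by (rule nn_integral_add[symmetric]) auto
  also have "\<dots> = (\<integral>\<^sup>+ x. (e2ennreal (f x - ereal (c x)) + ennreal (c x)) + e2ennreal (- f x) \<partial>M)"
    by (intro nn_integral_cong e2ennreal_minus_parts nonpos)
  also have "\<dots> = Hp + Cp + Fm"
    unfolding Hp_def Cp_def Fm_def by (simp add: nn_integral_add)
  finally have "enn2ereal Hp - enn2ereal Hm = - enn2ereal Fm - ereal (enn2real Cp - enn2real Cm)"
    using nn_integral_e2ennreal_diff_finite[OF nonpos c] integrableD(2,3)[OF c]
    unfolding Hp_def Cp_def Cm_def by (rule enn2ereal_diff_eq_of_add_eq)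
  then show ?thesis
    unfolding ereal_integral_nonpos_eq[OF nonpos] real_lebesgue_integral_def[OF c]
    by (simp add: ereal_integral_def Hp_def Hm_def Cp_def Cm_def Fm_def)
qed

context sigma_finite_subalgebra
begin

lemma nn_integral_nn_cond_exp:
  "f \<in> borel_measurable M \<Longrightarrow> (\<integral>\<^sup>+ x. nn_cond_exp M F f x \<partial>M) = (\<integral>\<^sup>+ x. f x \<partial>M)"
  using nn_cond_exp_intg[of "\<lambda>_. 1" f] by simp

lemma nn_cond_exp_finite:
  assumes "f \<in> borel_measurable M" "(\<integral>\<^sup>+ x. f x \<partial>M) \<noteq> \<infinity>"
  shows "AE x in M. nn_cond_exp M F f x \<noteq> \<infinity>"
  using assms by (intro nn_integral_PInf_AE) (simp_all add: nn_integral_nn_cond_exp)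

lemma ereal_cond_exp_le_real_cond_exp:
  assumes k: "integrable M k" and [measurable]: "h \<in> borel_measurable M"
    and le: "AE x in M. h x \<le> ereal (k x)"
  shows "AE x in M. ereal_cond_exp M F h x \<le> ereal (real_cond_exp M F k x)"
proof -
  have [measurable]: "k \<in> borel_measurable M"
    using k by simp
  have "AE x in M. nn_cond_exp M F (\<lambda>x. e2ennreal (h x)) x \<le> nn_cond_exp M F (\<lambda>x. ennreal (k x)) x"
    using le by (intro nn_cond_exp_mono) (auto elim!: eventually_mono dest: e2ennreal_mono)
  moreover have "AE x in M. nn_cond_exp M F (\<lambda>x. ennreal (- k x)) x \<le> nn_cond_exp M F (\<lambda>x. e2ennreal (- h x)) x"
  proof (rule nn_cond_exp_mono)
    show "AE x in M. ennreal (- k x) \<le> e2ennreal (- h x)"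
      using le
    proof eventually_elim
      case (elim x)
      then have "ereal (- k x) \<le> - h x"
        by (cases "h x") auto
      then show ?case
        using e2ennreal_mono by fastforce
    qed
  qed simp_all
  moreover have "AE x in M. nn_cond_exp M F (\<lambda>x. ennreal (k x)) x \<noteq> \<infinity>"
    using integrableD(2)[OF k] by (intro nn_cond_exp_finite) auto
  moreover have "AE x in M. nn_cond_exp M F (\<lambda>x. ennreal (- k x)) x \<noteq> \<infinity>"
    using integrableD(3)[OF k] by (intro nn_cond_exp_finite) auto
  ultimately show ?thesis
    unfolding ereal_cond_exp_def real_cond_exp_def by eventually_elim (rule enn2ereal_diff_le)
qed

lemma ereal_integral_le_of_ereal_cond_exp_le:
  assumes [measurable]: "h \<in> borel_measurable M" "p \<in> borel_measurable M"
    and fin: "(\<integral>\<^sup>+ x. e2ennreal (h x) \<partial>M) \<noteq> \<infinity>" and nonpos: "\<And>x. p x \<le> 0"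
    and le: "AE x in M. ereal_cond_exp M F h x \<le> p x"
  shows "ereal_integral M h \<le> ereal_integral M p"
proof -
  let ?Ep = "nn_cond_exp M F (\<lambda>x. e2ennreal (h x))" and ?Em = "nn_cond_exp M F (\<lambda>x. e2ennreal (- h x))"
  have "AE x in M. ?Ep x \<noteq> \<infinity>"
    using fin by (intro nn_cond_exp_finite) auto
  with le have "AE x in M. e2ennreal (- p x) + ?Ep x \<le> ?Em x"
    unfolding ereal_cond_exp_def by eventually_elim (rule e2ennreal_uminus_add_le[OF _ _ nonpos])
  then have "(\<integral>\<^sup>+ x. e2ennreal (- p x) + ?Ep x \<partial>M) \<le> (\<integral>\<^sup>+ x. ?Em x \<partial>M)"
    by (rule nn_integral_mono_AE)
  then have "(\<integral>\<^sup>+ x. e2ennreal (- p x) \<partial>M) + (\<integral>\<^sup>+ x. e2ennreal (h x) \<partial>M)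
      \<le> (\<integral>\<^sup>+ x. e2ennreal (- h x) \<partial>M)"
    by (simp add: nn_integral_add nn_integral_nn_cond_exp)
  then show ?thesis
    unfolding ereal_integral_nonpos_eq[OF nonpos] ereal_integral_def
    using fin by (rule enn2ereal_diff_le_uminus)
qed

end

lemma subalgebra_sigma_x:
  assumes "sets M = sets borel"
  shows "subalgebra M (sigma_x M)"
proof -
  have "fst \<in> measurable M borel"
    unfolding measurable_cong_sets[OF assms refl] by (rule borel_measurable_fst)
  then show ?thesis
    unfolding subalgebra_def sigma_x_def by (auto simp: measurable_iff_sets)
qed

lemma measurable_sigma_x_fst:
  "f \<in> measurable borel N \<Longrightarrow> (\<lambda>w. f (fst w)) \<in> measurable (sigma_x M) N"
  unfolding sigma_x_def by (rule measurable_compose[OF measurable_vimage_algebra1]) auto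

lemma P2_finite_measure_subalgebra_sigma_x:
  assumes "P2 M"
  shows "finite_measure_subalgebra M (sigma_x M)"
proof -
  interpret prob_space M
    using assms unfolding P2_def by simp
  have "sets M = sets borel"
    using assms unfolding P2_def by simp
  then show ?thesis
    by unfold_locales (rule subalgebra_sigma_x)
qed

lemma P2_integrable_bounded_linear:
  fixes l :: "'a::euclidean_space \<Rightarrow> 'b::{banach, second_countable_topology}"
  assumes "P2 M" "bounded_linear l"
  shows "integrable M l"
proof -
  interpret prob_space M
    using assms unfolding P2_def by simp
  obtain K where K: "\<And>x. norm (l x) \<le> norm x * K" "K > 0"
    using bounded_linear.pos_bounded[OF assms(2)] by blast
  have sets: "sets M = sets borel" and sq: "integrable M (\<lambda>x. (norm x)\<^sup>2)"
    using assms(1) unfolding P2_def by auto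
  have "l \<in> borel_measurable M"
    unfolding measurable_cong_sets[OF sets refl]
    by (intro borel_measurable_continuous_onI linear_continuous_on assms(2))
  moreover have "norm (l x) \<le> norm (K * (1 + (norm x)\<^sup>2))" for x
  proof -
    have "norm x \<le> 1 + (norm x)\<^sup>2"
      by (meson add_increasing add_increasing2 linorder_linear pos2 self_le_power zero_le_one zero_le_power2)
    then have "norm x * K \<le> (1 + (norm x)\<^sup>2) * K"
      using K(2) by (intro mult_right_mono) auto
    then have "norm (l x) \<le> K * (1 + (norm x)\<^sup>2)"
      using K(1)[of x] by (simp add: mult.commute)
    then show ?thesis
      using K(2) by (simp add: abs_mult)
  qed
  moreover have "integrable M (\<lambda>x. K * (1 + (norm x)\<^sup>2))"
    using sq by (intro integrable_mult_right Bochner_Integration.integrable_add integrable_const)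
  ultimately show ?thesis
    by (blast intro: Bochner_Integration.integrable_bound AE_I2)
qed

lemma P2_integrable_mult_bounded_linear:
  fixes l1 l2 :: "'a::euclidean_space \<Rightarrow> real"
  assumes "P2 M" "bounded_linear l1" "bounded_linear l2"
  shows "integrable M (\<lambda>x. l1 x * l2 x)"
proof -
  obtain K1 K2 where K: "\<And>x. \<bar>l1 x\<bar> \<le> norm x * K1" "\<And>x. \<bar>l2 x\<bar> \<le> norm x * K2" "K1 > 0"
    using bounded_linear.pos_bounded[OF assms(2)] bounded_linear.bounded[OF assms(3)]
    by (metis real_norm_def)
  have sets: "sets M = sets borel" and sq: "integrable M (\<lambda>x. (norm x)\<^sup>2)"
    using assms(1) unfolding P2_def by auto
  have "(\<lambda>x. l1 x * l2 x) \<in> borel_measurable M"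
    unfolding measurable_cong_sets[OF sets refl]
    by (intro borel_measurable_times borel_measurable_continuous_onI linear_continuous_on assms(2,3))
  moreover have "norm (l1 x * l2 x) \<le> norm (K1 * K2 * (norm x)\<^sup>2)" for x
  proof -
    have "\<bar>l1 x * l2 x\<bar> \<le> (norm x * K1) * (norm x * K2)"
      unfolding abs_mult using K by (intro mult_mono) (auto intro: order_trans[OF abs_ge_zero])
    then show ?thesis
      by (simp add: power2_eq_square algebra_simps)
  qed
  moreover have "integrable M (\<lambda>x. K1 * K2 * (norm x)\<^sup>2)"
    using sq by (rule integrable_mult_right)
  ultimately show ?thesis
    by (blast intro: Bochner_Integration.integrable_bound AE_I2)
qed

lemma P2_integrable_cost:
  fixes \<gamma> :: "((real \<times> real) \<times> (real \<times> real)) measure"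
  assumes "P2 \<gamma>"
  shows "integrable \<gamma> (\<lambda>w. cost (fst w) (snd w))"
  unfolding cost_def
  by (intro P2_integrable_mult_bounded_linear assms bounded_linear_intros)

lemma real_cond_exp_cost_diff:
  assumes "Gamma \<nu> \<gamma>"
  shows "AE z in \<gamma>. real_cond_exp \<gamma> (sigma_x \<gamma>) (\<lambda>w. cost g (snd w) - cost (fst w) (snd w)) z
    = cost g (fst z)"
proof -
  have P2: "P2 \<gamma>"
    and mart1: "AE z in \<gamma>. real_cond_exp \<gamma> (sigma_x \<gamma>) (\<lambda>w. fst (snd w)) z = fst (fst z)"
    and mart2: "AE z in \<gamma>. real_cond_exp \<gamma> (sigma_x \<gamma>) (\<lambda>w. snd (snd w)) z = snd (fst z)"
    using assms unfolding Gamma_def by auto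
  interpret finite_measure_subalgebra \<gamma> "sigma_x \<gamma>"
    using P2 by (rule P2_finite_measure_subalgebra_sigma_x)
  have [measurable_cong]: "sets \<gamma> = sets borel"
    using P2 unfolding P2_def by simp
  obtain a b where g: "g = (a, b)"
    by (cases g)
  define f0 where "f0 w = a * b - fst (fst w) * snd (fst w)" for w :: "(real \<times> real) \<times> (real \<times> real)"
  define f1 where "f1 w = (fst (fst w) - a) * snd (snd w)" for w :: "(real \<times> real) \<times> (real \<times> real)"
  define f2 where "f2 w = (snd (fst w) - b) * fst (snd w)" for w :: "(real \<times> real) \<times> (real \<times> real)"
  have split: "(\<lambda>w. cost g (snd w) - cost (fst w) (snd w)) = (\<lambda>w. (f0 w + f1 w) + f2 w)"
    by (auto simp: g cost_def f0_def f1_def f2_def algebra_simps)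
  have [measurable]: "(\<lambda>w. fst (fst w) - a) \<in> borel_measurable (sigma_x \<gamma>)"
    "(\<lambda>w. snd (fst w) - b) \<in> borel_measurable (sigma_x \<gamma>)"
    "f0 \<in> borel_measurable (sigma_x \<gamma>)"
    unfolding f0_def by (auto intro!: measurable_sigma_x_fst[where f = "\<lambda>x. _ x"])
  have lin: "integrable \<gamma> l" if "bounded_linear l" for l :: "_ \<Rightarrow> real"
    using P2 that by (rule P2_integrable_bounded_linear)
  have quad: "integrable \<gamma> (\<lambda>w. l1 w * l2 w)" if "bounded_linear l1" "bounded_linear l2"
    for l1 l2 :: "_ \<Rightarrow> real"
    using P2 that by (rule P2_integrable_mult_bounded_linear)
  have i0: "integrable \<gamma> f0"
    unfolding f0_def by (intro Bochner_Integration.integrable_diff integrable_const quad bounded_linear_intros)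
  have i1: "integrable \<gamma> f1" and i2: "integrable \<gamma> f2"
    unfolding f1_def f2_def left_diff_distrib
    by (intro Bochner_Integration.integrable_diff integrable_mult_right quad lin bounded_linear_intros)+
  let ?E = "real_cond_exp \<gamma> (sigma_x \<gamma>)"
  have "AE z in \<gamma>. ?E (\<lambda>w. (f0 w + f1 w) + f2 w) z = ?E (\<lambda>w. f0 w + f1 w) z + ?E f2 z"
    using i0 i1 i2 by (intro real_cond_exp_add) auto
  moreover have "AE z in \<gamma>. ?E (\<lambda>w. f0 w + f1 w) z = ?E f0 z + ?E f1 z"
    using i0 i1 by (rule real_cond_exp_add)
  moreover have "AE z in \<gamma>. ?E f0 z = f0 z"
    using i0 by (rule real_cond_exp_F_meas) measurable
  moreover have "AE z in \<gamma>. ?E f1 z = (fst (fst z) - a) * ?E (\<lambda>w. snd (snd w)) z"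
    using i1 unfolding f1_def by (intro real_cond_exp_mult) auto
  moreover have "AE z in \<gamma>. ?E f2 z = (snd (fst z) - b) * ?E (\<lambda>w. fst (snd w)) z"
    using i2 unfolding f2_def by (intro real_cond_exp_mult) auto
  ultimately show ?thesis
    using mart1 mart2 unfolding split
    by eventually_elim (auto simp: g cost_def f0_def algebra_simps)
qed

lemma P2_integrable_cost_snd:
  fixes \<gamma> :: "((real \<times> real) \<times> (real \<times> real)) measure"
  assumes "P2 \<gamma>"
  shows "integrable \<gamma> (\<lambda>w. cost g (snd w))"
proof -
  interpret prob_space \<gamma>
    using assms unfolding P2_def by simp
  have eq: "(\<lambda>w. cost g (snd w)) = (\<lambda>w. fst g * snd g - (fst g * snd (snd w) + snd g * fst (snd w))
      + fst (snd w) * snd (snd w))"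
    by (simp add: fun_eq_iff cost_def algebra_simps)
  show ?thesis
    unfolding eq
    by (intro Bochner_Integration.integrable_add Bochner_Integration.integrable_diff
        integrable_const integrable_mult_right P2_integrable_bounded_linear
        P2_integrable_mult_bounded_linear assms bounded_linear_intros)
qed

lemma ereal_cond_exp_phi_minus_cost_le:
  assumes "Gamma \<nu> \<gamma>"
  shows "AE z in \<gamma>. ereal_cond_exp \<gamma> (sigma_x \<gamma>) (\<lambda>w. phi G (snd w) - ereal (cost (fst w) (snd w))) z
    \<le> phi G (fst z)"
proof -
  have P2: "P2 \<gamma>"
    using assms unfolding Gamma_def by simp
  interpret finite_measure_subalgebra \<gamma> "sigma_x \<gamma>"
    using P2 by (rule P2_finite_measure_subalgebra_sigma_x)
  have [measurable_cong]: "sets \<gamma> = sets borel"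
    using P2 unfolding P2_def by simp
  obtain D where D: "countable D" "D \<subseteq> G" "G \<subseteq> closure D"
    by (rule separable)
  have "AE z in \<gamma>. ereal_cond_exp \<gamma> (sigma_x \<gamma>) (\<lambda>w. phi G (snd w) - ereal (cost (fst w) (snd w))) z
      \<le> ereal (cost g (fst z))" if "g \<in> D" for g
  proof -
    have "AE z in \<gamma>. ereal_cond_exp \<gamma> (sigma_x \<gamma>) (\<lambda>w. phi G (snd w) - ereal (cost (fst w) (snd w))) z
        \<le> ereal (real_cond_exp \<gamma> (sigma_x \<gamma>) (\<lambda>w. cost g (snd w) - cost (fst w) (snd w)) z)"
    proof (rule ereal_cond_exp_le_real_cond_exp)
      show "integrable \<gamma> (\<lambda>w. cost g (snd w) - cost (fst w) (snd w))"
        using P2 by (intro Bochner_Integration.integrable_diff P2_integrable_cost_snd P2_integrable_cost)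
      have "phi G (snd w) - ereal (cost (fst w) (snd w)) \<le> ereal (cost g (snd w) - cost (fst w) (snd w))"
        for w
        using phi_le_cost[of g G "snd w"] D(2) that by (cases "phi G (snd w)") auto
      then show "AE w in \<gamma>. phi G (snd w) - ereal (cost (fst w) (snd w))
          \<le> ereal (cost g (snd w) - cost (fst w) (snd w))"
        by simp
    qed measurable
    with real_cond_exp_cost_diff[OF assms, where g = g] show ?thesis
      by eventually_elim simp
  qed
  with D(1) have "AE z in \<gamma>. \<forall>g\<in>D.
      ereal_cond_exp \<gamma> (sigma_x \<gamma>) (\<lambda>w. phi G (snd w) - ereal (cost (fst w) (snd w))) z
        \<le> ereal (cost g (fst z))"
    by (simp add: AE_ball_countable)
  moreover have "phi G y = (INF g\<in>D. ereal (cost g y))" for y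
    using phi_dense_subset[OF D(2,3)] unfolding phi_def by metis
  ultimately show ?thesis
    by (auto elim!: eventually_mono intro: INF_greatest)
qed

theorem lemma7:
  fixes \<nu> :: "(real \<times> real) measure"
    and \<gamma> :: "((real \<times> real) \<times> (real \<times> real)) measure"
    and G :: "(real \<times> real) set"
  assumes "P2 \<nu>"
    and "Gamma \<nu> \<gamma>"
    and "maximal_monotone G"
  shows "(AE z in \<gamma>.
            ereal_cond_exp \<gamma> (sigma_x \<gamma>) (\<lambda>w. phi G (snd w) - ereal (cost (fst w) (snd w))) z
              \<le> phi G (fst z)
          \<and> phi G (fst z) \<le> 0)
       \<and> ereal_integral \<nu> (phi G) - ereal (\<integral> w. cost (fst w) (snd w) \<partial>\<gamma>)
            \<le> ereal_integral (distr \<gamma> borel fst) (phi G)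
       \<and> ereal_integral (distr \<gamma> borel fst) (phi G) \<le> 0"
proof -
  have P2: "P2 \<gamma>" and \<nu>: "distr \<gamma> borel snd = \<nu>"
    using assms(2) unfolding Gamma_def by auto
  interpret finite_measure_subalgebra \<gamma> "sigma_x \<gamma>"
    using P2 by (rule P2_finite_measure_subalgebra_sigma_x)
  have [measurable_cong]: "sets \<gamma> = sets borel"
    using P2 unfolding P2_def by simp
  have nonpos: "phi G y \<le> 0" for y
    using assms(3) by (rule phi_nonpos)
  have cost: "integrable \<gamma> (\<lambda>w. cost (fst w) (snd w))"
    using P2 by (rule P2_integrable_cost)
  have cond: "AE z in \<gamma>. ereal_cond_exp \<gamma> (sigma_x \<gamma>)
      (\<lambda>w. phi G (snd w) - ereal (cost (fst w) (snd w))) z \<le> phi G (fst z)"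
    using assms(2) by (rule ereal_cond_exp_phi_minus_cost_le)
  have "ereal_integral \<nu> (phi G) - ereal (\<integral> w. cost (fst w) (snd w) \<partial>\<gamma>)
      = ereal_integral \<gamma> (\<lambda>w. phi G (snd w) - ereal (cost (fst w) (snd w)))"
    unfolding \<nu>[symmetric] using cost nonpos
    by (simp add: ereal_integral_distr ereal_integral_diff_integral)
  also have "\<dots> \<le> ereal_integral \<gamma> (\<lambda>z. phi G (fst z))"
    using nn_integral_e2ennreal_diff_finite[OF nonpos cost] nonpos cond
    by (intro ereal_integral_le_of_ereal_cond_exp_le) auto
  also have "\<dots> = ereal_integral (distr \<gamma> borel fst) (phi G)"
    by (simp add: ereal_integral_distr)
  finally show ?thesis
    using cond nonpos ereal_integral_nonpos[of "phi G", OF nonpos] by auto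
qed

end
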